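(* Fix $Y$, $q>0$, $\delta>0$, $\rho\in\mathbb R$, and let $(a^*(\beta),b^*(\beta))$ be the selected pair as a function of $\beta\in(0,1)$. Then: 1. If $\psi_Y'(0+)+q\rho<0$, then for all $\beta<1$ sufficiently close to $1$ one has $0<a^*(\beta)<b^*(\beta)$ and $Z^{(q)}(b^*(\beta)-a^*(\beta))=\beta^{-1}$. In particular, $b^*(\beta)-a^*(\beta)\to0$ as $\beta\uparrow1$. 2. If $\psi_Y'(0+)+q\rho>0$, then $a^*(\beta)=b^*(\beta)=0$ for all $\beta<1$ sufficiently close to $1$. 3. If $\psi_Y'(0+)+q\rho=0$ and $\psi_X'(0+)>0$, then $b^*(\beta)>0$ for every $\beta\in(0,1)$, and $a^*(\beta)\to0$ and $b^*(\beta)\to0$ as $\beta\uparrow1$. 4. If $\psi_Y'(0+)+q\rho=0$ and $\psi_X'(0+)\le0$, then $a^*(\beta)=b^*(\beta)=0$ for all $\beta\in(0,1)$.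
   Context: Let $Y$ be a spectrally positive Lévy process (not a subordinator) with Laplace exponent $\psi_Y(\theta)=\log\mathbb E[e^{-\theta Y_1}]$ and $\mathbb E[Y_1]=-\psi_Y'(0+)<\infty$. Let $q>0$, $\delta>0$, and $\psi_X(\theta)=\psi_Y(\theta)+\delta\theta$ (so $\psi_X'(0+)=\psi_Y'(0+)+\delta$). The scale functions $\mathbb W^{(q)},W^{(q)}$ vanish on $(-\infty,0)$, are continuous and strictly increasing on $[0,\infty)$, and have Laplace transforms $1/(\psi_Y(\theta)-q)$ and $1/(\psi_X(\theta)-q)$. Let $\mathbb Z^{(q)}(x)=1+q\int_0^x\mathbb W^{(q)}$, $Z^{(q)}(x)=1+q\int_0^xW^{(q)}$, $\overline Z^{(q)}(x)=\int_0^xZ^{(q)}$, and $R^{(q)}(z)=\overline Z^{(q)}(z)+\psi_X'(0+)/q$. Let $\tilde r^{(q)}_c(z)=R^{(q)}(z)+\delta\int_c^z\mathbb W^{(q)}(z-y)Z^{(q)}(y)\,dy$. For $\beta\in(0,1)$ and $\rho\in\mathbb R$, let $\Gamma(a,b)=\delta\mathbb Z^{(q)}(a)-q\rho-q\beta\tilde r^{(q)}_{b-a}(b)$ for $0\le a\le b$. Selected pair: if $\Gamma(0,0)=\delta-q\rho-\beta\psi_X'(0+)\le0$, then $a^*=b^*=0$. Otherwise, $b^*>0$ is the unique root of $\min_{0\le a\le b^*}\Gamma(a,b^* )=0$, and $a^*$ is the unique minimizer of $a\mapsto\Gamma(a,b^* )$ on $[0,b^*]$. *)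

theory Defs
  imports "HOL-Analysis.Analysis"
begin

text \<open>A spectrally positive Levy process Y is determined (in law) by its triple
  (gam, sig, Lm): drift parameter gam, Gaussian coefficient sig >= 0 and Levy measure Lm
  concentrated on (0,infinity) with integral of min 1 (x^2) finite. Its Laplace exponent
  psi(th) = log E[exp(-th Y_1)] is, for th >= 0,
  gam th + sig^2 th^2/2 + integral of (exp(-th x) - 1 + th x 1_{x<1}) Lm(dx).\<close>

definition spos_levy_triple :: "real \<Rightarrow> real \<Rightarrow> real measure \<Rightarrow> bool" where
  "spos_levy_triple gam sig Lm \<longleftrightarrow>
     sets Lm = sets borel \<and> sig \<ge> 0 \<and> emeasure Lm {..0} = 0 \<and>
     (\<integral>\<^sup>+ x. ennreal (min 1 (x\<^sup>2)) \<partial>Lm) < \<infinity>"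

text \<open>Y is a subordinator iff it has no Gaussian part, its jumps are of bounded variation
  and its (linear) drift d = -(gam + integral over (0,1) of x Lm(dx)) is nonnegative.\<close>
definition spos_is_subordinator :: "real \<Rightarrow> real \<Rightarrow> real measure \<Rightarrow> bool" where
  "spos_is_subordinator gam sig Lm \<longleftrightarrow>
     sig = 0 \<and> (\<integral>\<^sup>+ x. ennreal (x * indicator {0<..<1} x) \<partial>Lm) < \<infinity> \<and>
     gam + (\<integral>x. x * indicator {0<..<1} x \<partial>Lm) \<le> 0"

text \<open>Finite first moment: E|Y_1| < infinity iff the big jumps are integrable.\<close>
definition spos_finite_mean :: "real measure \<Rightarrow> bool" where
  "spos_finite_mean Lm \<longleftrightarrow> (\<integral>\<^sup>+ x. ennreal (x * indicator {1..} x) \<partial>Lm) < \<infinity>"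

definition laplace_exp :: "real \<Rightarrow> real \<Rightarrow> real measure \<Rightarrow> real \<Rightarrow> real" where
  "laplace_exp gam sig Lm th =
     gam * th + sig\<^sup>2 * th\<^sup>2 / 2 +
     (\<integral>x. exp (- th * x) - 1 + th * x * indicator {..<1} x \<partial>Lm)"

definition rderiv0 :: "(real \<Rightarrow> real) \<Rightarrow> real" where
  "rderiv0 f = (THE D. (f has_real_derivative D) (at 0 within {0..}))"

definition is_scale_fun :: "(real \<Rightarrow> real) \<Rightarrow> real \<Rightarrow> (real \<Rightarrow> real) \<Rightarrow> bool" where
  "is_scale_fun psi q W \<longleftrightarrow>
     (\<forall>x<0. W x = 0) \<and> continuous_on {0..} W \<and> strict_mono_on {0..} W \<and>
     (\<exists>th0. \<forall>th>th0. ((\<lambda>x. exp (- th * x) * W x) has_integral 1 / (psi th - q)) {0..})"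

definition Zs :: "real \<Rightarrow> (real \<Rightarrow> real) \<Rightarrow> real \<Rightarrow> real" where
  "Zs q W x = 1 + q * integral {0..x} W"

definition Zbar :: "real \<Rightarrow> (real \<Rightarrow> real) \<Rightarrow> real \<Rightarrow> real" where
  "Zbar q W x = integral {0..x} (Zs q W)"

text \<open>dX stands for psi_X'(0+).\<close>
definition Rq :: "real \<Rightarrow> (real \<Rightarrow> real) \<Rightarrow> real \<Rightarrow> real \<Rightarrow> real" where
  "Rq q Wx dX z = Zbar q Wx z + dX / q"

definition rtil :: "real \<Rightarrow> real \<Rightarrow> (real \<Rightarrow> real) \<Rightarrow> (real \<Rightarrow> real) \<Rightarrow> real \<Rightarrow> real \<Rightarrow> real \<Rightarrow> real" where
  "rtil q \<delta> Wy Wx dX c z = Rq q Wx dX z + \<delta> * integral {c..z} (\<lambda>y. Wy (z - y) * Zs q Wx y)"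

definition Gam :: "real \<Rightarrow> real \<Rightarrow> real \<Rightarrow> (real \<Rightarrow> real) \<Rightarrow> (real \<Rightarrow> real) \<Rightarrow> real \<Rightarrow> real
                   \<Rightarrow> real \<Rightarrow> real \<Rightarrow> real" where
  "Gam q \<delta> \<rho> Wy Wx dX \<beta> a b =
     \<delta> * Zs q Wy a - q * \<rho> - q * \<beta> * rtil q \<delta> Wy Wx dX (b - a) b"

definition minGam :: "real \<Rightarrow> real \<Rightarrow> real \<Rightarrow> (real \<Rightarrow> real) \<Rightarrow> (real \<Rightarrow> real) \<Rightarrow> real \<Rightarrow> real
                   \<Rightarrow> real \<Rightarrow> real" where
  "minGam q \<delta> \<rho> Wy Wx dX \<beta> b = Inf ((\<lambda>a. Gam q \<delta> \<rho> Wy Wx dX \<beta> a b) ` {0..b})"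

definition bstar :: "real \<Rightarrow> real \<Rightarrow> real \<Rightarrow> (real \<Rightarrow> real) \<Rightarrow> (real \<Rightarrow> real) \<Rightarrow> real \<Rightarrow> real \<Rightarrow> real" where
  "bstar q \<delta> \<rho> Wy Wx dX \<beta> =
     (if Gam q \<delta> \<rho> Wy Wx dX \<beta> 0 0 \<le> 0 then 0
      else (THE b. 0 < b \<and> minGam q \<delta> \<rho> Wy Wx dX \<beta> b = 0))"

definition astar :: "real \<Rightarrow> real \<Rightarrow> real \<Rightarrow> (real \<Rightarrow> real) \<Rightarrow> (real \<Rightarrow> real) \<Rightarrow> real \<Rightarrow> real \<Rightarrow> real" where
  "astar q \<delta> \<rho> Wy Wx dX \<beta> =
     (if Gam q \<delta> \<rho> Wy Wx dX \<beta> 0 0 \<le> 0 then 0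
      else (let b = bstar q \<delta> \<rho> Wy Wx dX \<beta> in
            THE a. a \<in> {0..b} \<and>
              (\<forall>a'\<in>{0..b}. Gam q \<delta> \<rho> Wy Wx dX \<beta> a b \<le> Gam q \<delta> \<rho> Wy Wx dX \<beta> a' b)))"

end

theory Submission
  imports Defs "HOL-Real_Asymp.Real_Asymp"
begin

(* For fixed \<beta> and b, the derivative of a \<mapsto> \<Gamma>(a,b) is \<delta> q W_Y(a) (1 - \<beta> Z^(q)(b - a)). It changes sign
   exactly once, at a = b - z where Z^(q)(z) = 1/\<beta>, so the minimiser over [0,b] is max 0 (b - z), and the
   minimum m(b) is continuous and strictly decreasing in b, with m(0) = \<Gamma>(0,0) and m(b) \<le> \<Gamma>(0,0) - q\<beta>b.
   Hence b* > 0 exists iff \<Gamma>(0,0) = \<delta> - q\<rho> - \<beta>\<psi>_X'(0+) > 0, and then b* \<le> \<Gamma>(0,0)/(q\<beta>). As \<beta> \<rightarrow> 1,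
   \<Gamma>(0,0) \<rightarrow> -(\<psi>_Y'(0+) + q\<rho>) and z \<rightarrow> 0, which separates the four regimes; in the first, m(z) > 0 for \<beta>
   near 1 forces b* > z and b* - a* = z.
   The argument needs W(0) \<ge> 0, which is not part of the definition of a scale function used here. It holds
   because the Laplace exponent of a non-subordinator is unbounded above, so the transform 1/(\<psi> - q) is
   positive at arbitrarily large \<theta>, whereas W(0) < 0 would make it negative for all large \<theta>. *)

lemma exp_minus_le_quadratic:
  fixes u :: real
  assumes "0 \<le> u"
  shows "exp (- u) \<le> 1 - u + u\<^sup>2"
proof -
  have "exp (- u) * (1 + u) \<le> exp (- u) * exp u"
    by (intro mult_left_mono exp_ge_add_one_self) auto
  also have "\<dots> = 1" by (simp flip: exp_add)
  also have "1 \<le> (1 - u + u\<^sup>2) * (1 + u)"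
    using assms by (simp add: algebra_simps power2_eq_square)
  finally show ?thesis
    using assms by (simp add: mult_le_cancel_right)
qed

lemma integral_reflect_shift:
  fixes f :: "real \<Rightarrow> real"
  shows "integral {b - a..b} (\<lambda>y. f (b - y)) = integral {0..a} f"
proof -
  have "integral {-a..0} ((\<lambda>y. f (b - y)) \<circ> ((+) b)) = integral {-a + b..0 + b} (\<lambda>y. f (b - y))"
    by (rule integral_shift_Icc_real)
  moreover have "(\<lambda>y. f (b - y)) \<circ> ((+) b) = (\<lambda>x. f (- x))" by (auto simp: o_def)
  moreover have "integral {-a..-0} (\<lambda>x. f (- x)) = integral {0..a} f"
    by (rule Henstock_Kurzweil_Integration.integral_reflect_real)
  ultimately show ?thesis by (simp add: algebra_simps)
qed

lemma integral_stretch_to_unit: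
  fixes f :: "real \<Rightarrow> real"
  assumes "a > 0" "f integrable_on {0..a}"
  shows "integral {0..a} f = a * integral {0..1} (\<lambda>t. f (a * t))"
proof -
  obtain i where i: "(f has_integral i) (cbox 0 a)" using assms(2) by (auto simp: integrable_on_def)
  from has_integral_affinity'[OF i assms(1), of 0]
  have "((\<lambda>x. f (a * x)) has_integral (i / a)) (cbox 0 1)"
    using assms(1) by (simp add: divide_inverse mult.commute)
  then show ?thesis using i assms(1) by (simp add: integral_unique)
qed

section \<open>Growth of the Laplace exponent\<close>

definition small_jump_excess :: "real \<Rightarrow> real \<Rightarrow> real" where
  "small_jump_excess th x = max 0 (x - 1 / th) * indicator {0<..<1} x"

context
  fixes gam sig :: real and Lm :: "real measure"
  assumes triple: "spos_levy_triple gam sig Lm"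
begin

lemma levy_measurable_eq: "borel_measurable Lm = borel_measurable borel"
  using triple by (intro measurable_cong_sets) (auto simp: spos_levy_triple_def)

lemma levy_AE_pos: "AE x in Lm. x > 0"
proof (rule AE_I')
  show "{..0::real} \<in> null_sets Lm"
    using triple by (auto simp: spos_levy_triple_def null_sets_def)
qed auto

lemma levy_integrable_if_le_min_sq:
  assumes "g \<in> borel_measurable borel" and "AE x in Lm. \<bar>g x\<bar> \<le> C * min 1 (x\<^sup>2)"
  shows "integrable Lm g"
proof (rule Bochner_Integration.integrable_bound)
  have "integrable Lm (\<lambda>x. min 1 (x\<^sup>2))"
    using triple by (intro integrableI_nonneg) (auto simp: spos_levy_triple_def levy_measurable_eq)
  then show "integrable Lm (\<lambda>x. C * min 1 (x\<^sup>2))" by simp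
  show "g \<in> borel_measurable Lm" using assms(1) by (simp add: levy_measurable_eq)
  show "AE x in Lm. norm (g x) \<le> norm (C * min 1 (x\<^sup>2))"
    using assms(2) by eventually_elim auto
qed

lemma levy_integrable_compensated_exp:
  assumes "th > 0"
  shows "integrable Lm (\<lambda>x. exp (- th * x) - 1 + th * x * indicator {..<1} x)"
proof (rule levy_integrable_if_le_min_sq[where C = "1 + th\<^sup>2"])
  show "AE x in Lm. \<bar>exp (- th * x) - 1 + th * x * indicator {..<1} x\<bar> \<le> (1 + th\<^sup>2) * min 1 (x\<^sup>2)"
    using levy_AE_pos
  proof eventually_elim
    case (elim x)
    show ?case
    proof (cases "x < 1")
      case True
      have "1 - th * x \<le> exp (- (th * x))" using exp_ge_add_one_self[of "- (th * x)"] by simp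
      moreover have "exp (- (th * x)) \<le> 1 - th * x + (th * x)\<^sup>2"
        using assms elim by (intro exp_minus_le_quadratic) simp
      ultimately have "\<bar>exp (- th * x) - 1 + th * x * indicator {..<1} x\<bar> \<le> (th * x)\<^sup>2"
        using True by simp
      also have "\<dots> \<le> (1 + th\<^sup>2) * x\<^sup>2" by (simp add: power_mult_distrib mult_right_mono)
      finally show ?thesis using True elim by (simp add: power_le_one)
    next
      case False
      then have "min 1 (x\<^sup>2) = 1" by (simp add: one_le_power)
      moreover have "0 < exp (- th * x)" "exp (- th * x) \<le> 1" using assms elim by auto
      ultimately show ?thesis using False by (simp add: abs_le_iff add_increasing2)
    qed
  qed
qed measurable

lemma levy_integrable_small_jump_excess:
  assumes "th > 0"
  shows "integrable Lm (small_jump_excess th)"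
proof (rule levy_integrable_if_le_min_sq[where C = th])
  show "AE x in Lm. \<bar>small_jump_excess th x\<bar> \<le> th * min 1 (x\<^sup>2)"
  proof (rule AE_I2)
    fix x
    show "\<bar>small_jump_excess th x\<bar> \<le> th * min 1 (x\<^sup>2)"
    proof (cases "x \<in> {0<..<1} \<and> x > 1 / th")
      case True
      then have "x \<le> th * x\<^sup>2" using assms by (simp add: field_simps power2_eq_square)
      moreover have "1 / th > 0" using assms by simp
      ultimately have "x - 1 / th \<le> th * x\<^sup>2" by linarith
      moreover have "min 1 (x\<^sup>2) = x\<^sup>2" using True by (simp add: power_le_one)
      ultimately show ?thesis using True by (auto simp: small_jump_excess_def)
    qed (use assms in \<open>auto simp: small_jump_excess_def\<close>)
  qed
qed (unfold small_jump_excess_def, measurable)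

lemma small_jump_excess_integral_nonneg: "(\<integral>x. small_jump_excess th x \<partial>Lm) \<ge> 0"
  by (simp add: integral_nonneg_AE small_jump_excess_def)

lemma small_jump_excess_integral_mono:
  assumes "0 < s" "s \<le> t"
  shows "(\<integral>x. small_jump_excess s x \<partial>Lm) \<le> (\<integral>x. small_jump_excess t x \<partial>Lm)"
proof (intro integral_mono levy_integrable_small_jump_excess)
  have "1 / t \<le> 1 / s" using assms by (simp add: frac_le)
  then show "small_jump_excess s x \<le> small_jump_excess t x" for x
    by (auto simp: small_jump_excess_def indicator_def)
qed (use assms in auto)

text \<open>The compensated integrand dominates a truncation of x \<mapsto> th x on (0,1), up to the mass
  of the big jumps; this is what makes the Laplace exponent grow at least linearly.\<close>
lemma laplace_exp_ge_small_jump_excess: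
  assumes "th > 0"
  shows "laplace_exp gam sig Lm th \<ge>
    gam * th + sig\<^sup>2 * th\<^sup>2 / 2 + th * (\<integral>x. small_jump_excess th x \<partial>Lm) - measure Lm {1..}"
proof -
  let ?f = "\<lambda>x. exp (- th * x) - 1 + th * x * indicator {..<1} x"
  have int_big: "integrable Lm (indicator {1..} :: real \<Rightarrow> real)"
    by (rule levy_integrable_if_le_min_sq[where C = 1]) (auto simp: indicator_def)
  have "(\<integral>x. th * small_jump_excess th x - indicator {1..} x \<partial>Lm) \<le> integral\<^sup>L Lm ?f"
  proof (rule integral_mono_AE)
    show "AE x in Lm. th * small_jump_excess th x - indicator {1..} x \<le> ?f x"
      using levy_AE_pos
    proof eventually_elim
      case (elim x)
      have "1 - th * x \<le> exp (- (th * x))" using exp_ge_add_one_self[of "- (th * x)"] by simp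
      then show ?case
        using assms elim
        by (auto simp: small_jump_excess_def indicator_def max_def field_simps)
    qed
  qed (use int_big levy_integrable_small_jump_excess[OF assms]
      levy_integrable_compensated_exp[OF assms] in auto)
  moreover have "(\<integral>x. th * small_jump_excess th x - indicator {1..} x \<partial>Lm) =
      th * (\<integral>x. small_jump_excess th x \<partial>Lm) - measure Lm {1..}"
    using int_big levy_integrable_small_jump_excess[OF assms]
    by (simp add: sets_eq_imp_space_eq[of Lm borel] triple[unfolded spos_levy_triple_def])
  ultimately show ?thesis by (simp add: laplace_exp_def)
qed

lemma nn_integral_small_jumps_eq_SUP:
  "(\<integral>\<^sup>+ x. ennreal (x * indicator {0<..<1} x) \<partial>Lm) =
    (SUP n. ennreal (\<integral>x. small_jump_excess (Suc n) x \<partial>Lm))"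
proof -
  define h where "h n x = ennreal (small_jump_excess (Suc n) x)" for n x
  have inc: "incseq h"
  proof (intro incseq_SucI le_funI)
    fix n x
    have "1 / real (Suc (Suc n)) \<le> 1 / real (Suc n)" by (simp add: frac_le)
    then show "h n x \<le> h (Suc n) x" by (auto simp: h_def small_jump_excess_def indicator_def)
  qed
  have "(\<lambda>n. h n x) \<longlonglongrightarrow> ennreal (x * indicator {0<..<1} x)" for x
  proof -
    have "(\<lambda>n. small_jump_excess (Suc n) x) \<longlonglongrightarrow> max 0 (x - 0) * indicator {0<..<1} x"
      unfolding small_jump_excess_def
      by (intro tendsto_intros LIMSEQ_inverse_real_of_nat[unfolded inverse_eq_divide])
    also have "max 0 (x - 0) * indicator {0<..<1} x = x * indicator {0<..<1} x"
      by (auto simp: indicator_def)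
    finally show ?thesis unfolding h_def by (rule tendsto_ennrealI)
  qed
  moreover have "(\<lambda>n. h n x) \<longlonglongrightarrow> (SUP n. h n x)" for x
    using inc by (intro LIMSEQ_SUP) (auto simp: incseq_def le_fun_def)
  ultimately have SUP_h: "(SUP n. h n x) = ennreal (x * indicator {0<..<1} x)" for x
    using LIMSEQ_unique by blast
  have "h n \<in> borel_measurable Lm" for n
    unfolding h_def small_jump_excess_def levy_measurable_eq by measurable
  then have "(\<integral>\<^sup>+ x. ennreal (x * indicator {0<..<1} x) \<partial>Lm) = (SUP n. integral\<^sup>N Lm (h n))"
    unfolding SUP_h[symmetric] by (rule nn_integral_monotone_convergence_SUP[OF inc])
  moreover have "integral\<^sup>N Lm (h n) = ennreal (\<integral>x. small_jump_excess (Suc n) x \<partial>Lm)" for n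
    unfolding h_def by (intro nn_integral_eq_integral levy_integrable_small_jump_excess)
      (auto simp: small_jump_excess_def)
  ultimately show ?thesis by simp
qed

text \<open>A non-subordinator has a Gaussian part, or small jumps of infinite variation, or bounded
  variation with a strictly negative drift; in each case the bracket below is positive for some t0.\<close>
lemma laplace_exp_slope_pos:
  assumes not_sub: "\<not> spos_is_subordinator gam sig Lm"
  shows "\<exists>t0>0. gam + sig\<^sup>2 * t0 / 2 + (\<integral>x. small_jump_excess t0 x \<partial>Lm) > 0"
proof (cases "sig = 0")
  case False
  define t0 where "t0 = 2 * (\<bar>gam\<bar> + 1) / sig\<^sup>2"
  have "sig\<^sup>2 * t0 / 2 = \<bar>gam\<bar> + 1" using False by (simp add: t0_def)
  moreover have "t0 > 0" using False by (simp add: t0_def)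
  ultimately show ?thesis
    using small_jump_excess_integral_nonneg[of t0]
    by (intro exI[of _ t0]) linarith
next
  case sig: True
  show ?thesis
  proof (cases "gam > 0")
    case True
    then show ?thesis
      using sig small_jump_excess_integral_nonneg[of 1] by (intro exI[of _ 1]) auto
  next
    case False
    let ?X = "\<integral>\<^sup>+ x. ennreal (x * indicator {0<..<1} x) \<partial>Lm"
    have "ennreal (- gam) < ?X"
    proof (cases "?X < \<infinity>")
      case True
      have int: "integrable Lm (\<lambda>x. x * indicator {0<..<1} x)"
        using True by (intro integrableI_nonneg)
          (auto simp: levy_measurable_eq indicator_def)
      have "gam + (\<integral>x. x * indicator {0<..<1} x \<partial>Lm) > 0"
        using not_sub sig True by (auto simp: spos_is_subordinator_def)
      moreover have "?X = ennreal (\<integral>x. x * indicator {0<..<1} x \<partial>Lm)"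
        by (rule nn_integral_eq_integral[OF int]) (auto simp: indicator_def)
      ultimately show ?thesis using False by (simp add: ennreal_less_iff)
    qed (simp add: less_top[symmetric])
    then obtain n where "ennreal (- gam) < ennreal (\<integral>x. small_jump_excess (Suc n) x \<partial>Lm)"
      unfolding nn_integral_small_jumps_eq_SUP less_SUP_iff by blast
    then have "gam + (\<integral>x. small_jump_excess (Suc n) x \<partial>Lm) > 0"
      using False ennreal_less_iff by fastforce
    then show ?thesis using sig by (intro exI[of _ "real (Suc n)"]) auto
  qed
qed

lemma laplace_exp_unbounded:
  assumes "\<not> spos_is_subordinator gam sig Lm"
  shows "\<exists>th>T. laplace_exp gam sig Lm th > M"
proof -
  let ?J = "\<lambda>t. \<integral>x. small_jump_excess t x \<partial>Lm"
  obtain t0 where t0: "t0 > 0" and D_pos: "gam + sig\<^sup>2 * t0 / 2 + ?J t0 > 0"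
    using laplace_exp_slope_pos[OF assms] by blast
  define D where "D = gam + sig\<^sup>2 * t0 / 2 + ?J t0"
  define c where "c = measure Lm {1..}"
  define th where "th = max (max T t0 + 1) ((\<bar>M\<bar> + c + 1) / D)"
  have th: "th > T" "th > t0" by (auto simp: th_def)
  have "th \<ge> (\<bar>M\<bar> + c + 1) / D" by (simp add: th_def)
  moreover have "D > 0" using D_pos by (simp add: D_def)
  ultimately have th_D: "th * D \<ge> \<bar>M\<bar> + c + 1"
    by (simp add: pos_divide_le_eq mult.commute)
  have "sig\<^sup>2 * t0 \<le> sig\<^sup>2 * th" using th by (intro mult_left_mono) auto
  then have "D \<le> gam + sig\<^sup>2 * th / 2 + ?J th"
    using th t0 small_jump_excess_integral_mono[of t0 th] by (simp add: D_def)
  then have "th * D \<le> th * (gam + sig\<^sup>2 * th / 2 + ?J th)"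
    using th t0 by (intro mult_left_mono) auto
  moreover have "laplace_exp gam sig Lm th \<ge> th * (gam + sig\<^sup>2 * th / 2 + ?J th) - c"
    using laplace_exp_ge_small_jump_excess[of th] th t0
    by (simp add: c_def algebra_simps power2_eq_square)
  ultimately show ?thesis using th th_D by (intro exI[of _ th]) (auto simp: c_def)
qed

end

section \<open>Scale functions\<close>

definition admissible_scale :: "(real \<Rightarrow> real) \<Rightarrow> bool" where
  "admissible_scale W \<longleftrightarrow>
     (\<forall>x<0. W x = 0) \<and> continuous_on {0..} W \<and> strict_mono_on {0..} W \<and> W 0 \<ge> 0"

lemma exp_weighted_le_split:
  fixes W :: "real \<Rightarrow> real"
  assumes x: "0 \<le> x" and th: "0 \<le> s" "s \<le> th" and e: "0 < e" and w: "0 \<le> w" and M: "0 \<le> M"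
    and W_small: "\<And>y. 0 \<le> y \<Longrightarrow> y \<le> e \<Longrightarrow> W y \<le> - w"
    and W_bounded: "\<And>y. 0 \<le> y \<Longrightarrow> 0 \<le> W y + M"
  shows "exp (- th * x) * W x \<le> (if x \<in> {0..e/2} then - w * exp (- th * (e/2)) else 0)
           + exp (- (th - s) * e) * (exp (- s * x) * (W x + M))"
proof -
  have tail_nonneg: "0 \<le> exp (- (th - s) * e) * (exp (- s * x) * (W x + M))"
    using W_bounded[OF x] by simp
  show ?thesis
  proof (cases "x \<le> e")
    case True
    have "exp (- th * x) * W x \<le> exp (- th * x) * (- w)"
      using W_small[OF x True] by (intro mult_left_mono) auto
    also have "\<dots> \<le> (if x \<in> {0..e/2} then - w * exp (- th * (e/2)) else 0)"
    proof (cases "x \<le> e/2")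
      case True
      then have "th * x \<le> th * (e/2)" using th by (intro mult_left_mono) auto
      then have "exp (- th * (e/2)) \<le> exp (- th * x)" by simp
      then have "w * exp (- th * (e/2)) \<le> w * exp (- th * x)" by (rule mult_left_mono[OF _ w])
      then show ?thesis using True x by (simp add: algebra_simps)
    qed (use w in simp)
    finally show ?thesis using tail_nonneg by linarith
  next
    case False
    have "exp (- th * x) * W x \<le> exp (- th * x) * (W x + M)" using M by simp
    also have "\<dots> = exp (- (th - s) * x) * (exp (- s * x) * (W x + M))"
      by (simp add: algebra_simps flip: exp_add)
    also have "\<dots> \<le> exp (- (th - s) * e) * (exp (- s * x) * (W x + M))"
      using False th W_bounded[OF x] by (intro mult_right_mono) (auto simp: mult_left_mono_neg)
    finally show ?thesis using False e by simp
  qed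
qed

text \<open>Near 0 the kernel exp (- th x) concentrates all its mass, so a negative value at 0
  makes the Laplace transform negative for large th.\<close>
lemma laplace_transform_eventually_neg:
  fixes W :: "real \<Rightarrow> real"
  assumes cont: "continuous_on {0..} W" and mono: "mono_on {0..} W" and W0: "W 0 < 0"
    and s: "0 < s" and int1: "((\<lambda>x. exp (- s * x) * W x) has_integral F) {0..}"
  shows "\<forall>\<^sub>F th in at_top. \<forall>I. ((\<lambda>x. exp (- th * x) * W x) has_integral I) {0..} \<longrightarrow> I < 0"
proof -
  define w where "w = - W 0 / 2"
  define M where "M = - W 0"
  have w: "w > 0" and M: "M > 0" using W0 by (auto simp: w_def M_def)
  have "continuous (at 0 within {0..}) W"
    using cont by (simp add: continuous_on_eq_continuous_within)
  then obtain d where d: "d > 0" "\<And>x. x \<in> {0..} \<Longrightarrow> dist x 0 < d \<Longrightarrow> dist (W x) (W 0) < w"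
    using w unfolding continuous_within_eps_delta by metis
  define e where "e = d / 2"
  have e: "e > 0" using d by (simp add: e_def)
  have W_small: "W y \<le> - w" if "0 \<le> y" "y \<le> e" for y
    using d(2)[of y] that d(1) by (auto simp: dist_real_def w_def e_def)
  have W_bounded: "0 \<le> W y + M" if "0 \<le> y" for y
    using mono_onD[OF mono, of 0 y] that by (auto simp: M_def)
  define C where "C = F + M / s"
  have int_tail: "((\<lambda>x. exp (- s * x) * (W x + M)) has_integral C) {0..}"
  proof -
    have "((\<lambda>x. M * exp (- s * x)) has_integral M * (exp (- s * 0) / s)) {0..}"
      by (intro has_integral_mult_right has_integral_exp_minus_to_infinity s)
    from has_integral_add[OF int1 this] show ?thesis by (simp add: C_def algebra_simps)
  qed
  have bound: "I \<le> exp (- th * (e/2)) * (- w * e / 2 + C * exp (s * e - th * e / 2))"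
    if th: "s \<le> th" and I: "((\<lambda>x. exp (- th * x) * W x) has_integral I) {0..}" for th I
  proof -
    have "((\<lambda>x. if x \<in> {0..e/2} then - w * exp (- th * (e/2)) else 0) has_integral
        (- w * exp (- th * (e/2)) * (e/2))) {0..}"
      using has_integral_const_real[of "- w * exp (- th * (e/2))" 0 "e/2"] e
      by (subst has_integral_restrict) (auto simp: algebra_simps)
    from has_integral_add[OF this has_integral_mult_right[OF int_tail]]
    have "I \<le> - w * exp (- th * (e/2)) * (e/2) + exp (- (th - s) * e) * C"
    proof (rule has_integral_le[OF I])
      show "exp (- th * x) * W x \<le> (if x \<in> {0..e/2} then - w * exp (- th * (e/2)) else 0)
          + exp (- (th - s) * e) * (exp (- s * x) * (W x + M))" if "x \<in> {0..}" for x
        using that s th e w M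
        by (intro exp_weighted_le_split W_small W_bounded) auto
    qed
    also have "\<dots> = exp (- th * (e/2)) * (- w * e / 2 + C * exp (s * e - th * e / 2))"
      by (simp add: algebra_simps flip: exp_add)
    finally show ?thesis .
  qed
  have "((\<lambda>th. - w * e / 2 + C * exp (s * e - th * e / 2)) \<longlongrightarrow> - w * e / 2 + C * 0) at_top"
    using e by (intro tendsto_intros) real_asymp
  then have "\<forall>\<^sub>F th in at_top. - w * e / 2 + C * exp (s * e - th * e / 2) < 0"
    using w e by (intro order_tendstoD) auto
  moreover have "\<forall>\<^sub>F th in at_top. s \<le> th" by (rule eventually_ge_at_top)
  ultimately show ?thesis
  proof eventually_elim
    case (elim th)
    show ?case
    proof (intro allI impI)
      fix I assume "((\<lambda>x. exp (- th * x) * W x) has_integral I) {0..}"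
      from bound[OF elim(2) this] mult_pos_neg[OF exp_gt_zero[of "- th * (e/2)"] elim(1)] show "I < 0" by linarith
    qed
  qed
qed

lemma scale_fun_nonneg_at_zero:
  assumes W: "is_scale_fun psi q W" and unbounded: "\<And>T. \<exists>th>T. psi th > q"
  shows "W 0 \<ge> 0"
proof (rule ccontr)
  assume "\<not> W 0 \<ge> 0"
  obtain th0 where lap: "\<And>th. th > th0 \<Longrightarrow>
      ((\<lambda>x. exp (- th * x) * W x) has_integral 1 / (psi th - q)) {0..}"
    using W by (auto simp: is_scale_fun_def)
  have "\<forall>\<^sub>F th in at_top. \<forall>I. ((\<lambda>x. exp (- th * x) * W x) has_integral I) {0..} \<longrightarrow> I < 0"
    using W \<open>\<not> W 0 \<ge> 0\<close>
    by (intro laplace_transform_eventually_neg[where s = "max th0 0 + 1", OF _ _ _ _ lap])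
      (auto simp: is_scale_fun_def intro: strict_mono_on_imp_mono_on)
  then obtain N where N: "\<And>th I. th \<ge> N \<Longrightarrow>
      ((\<lambda>x. exp (- th * x) * W x) has_integral I) {0..} \<Longrightarrow> I < 0"
    by (auto simp: eventually_at_top_linorder)
  obtain th where "th > max N th0" "psi th > q" using unbounded by blast
  with N[OF _ lap[of th]] show False by simp
qed

lemma is_scale_fun_admissible:
  assumes "is_scale_fun psi q W" and "\<And>T. \<exists>th>T. psi th > q"
  shows "admissible_scale W"
  using scale_fun_nonneg_at_zero[OF assms] assms(1)
  by (simp add: admissible_scale_def is_scale_fun_def)

lemma admissible_scale_mono: "admissible_scale W \<Longrightarrow> 0 \<le> x \<Longrightarrow> x \<le> y \<Longrightarrow> W x \<le> W y"
  using strict_mono_on_imp_mono_on[of "{0..}" W] by (auto simp: admissible_scale_def mono_on_def)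

lemma admissible_scale_nonneg: "admissible_scale W \<Longrightarrow> W x \<ge> 0"
  using admissible_scale_mono[of W 0 x] by (cases "x < 0") (auto simp: admissible_scale_def)

lemma admissible_scale_pos: "admissible_scale W \<Longrightarrow> x > 0 \<Longrightarrow> W x > 0"
  by (auto simp: admissible_scale_def strict_mono_on_def intro: le_less_trans)

lemma admissible_scale_continuous_on: "admissible_scale W \<Longrightarrow> 0 \<le> a \<Longrightarrow> continuous_on {a..b} W"
  by (rule continuous_on_subset[of "{0..}"]) (auto simp: admissible_scale_def)

lemma admissible_scale_integrable: "admissible_scale W \<Longrightarrow> 0 \<le> a \<Longrightarrow> W integrable_on {a..b}"
  by (rule integrable_continuous_interval[OF admissible_scale_continuous_on])

lemma admissible_scale_integral_nonneg: "admissible_scale W \<Longrightarrow> 0 \<le> a \<Longrightarrow> integral {a..b} W \<ge> 0"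
  by (rule integral_nonneg[OF admissible_scale_integrable]) (auto simp: admissible_scale_nonneg)

lemma Zs_nonpos: "x \<le> 0 \<Longrightarrow> Zs q W x = 1"
  by (cases "x = 0") (auto simp: Zs_def)

lemma Zs_diff:
  assumes "admissible_scale W" "0 \<le> x" "x \<le> y"
  shows "Zs q W y - Zs q W x = q * integral {x..y} W"
proof -
  have split: "integral {0..x} W + integral {x..y} W = integral {0..y} W"
    using assms by (intro Henstock_Kurzweil_Integration.integral_combine admissible_scale_integrable) auto
  show ?thesis by (simp add: Zs_def algebra_simps flip: split)
qed

lemma Zs_mono:
  assumes W: "admissible_scale W" and "q \<ge> 0" "x \<le> y"
  shows "Zs q W x \<le> Zs q W y"
proof -
  define x' where "x' = max 0 x"
  have "Zs q W x \<le> Zs q W x'"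
    by (cases "x \<le> 0") (auto simp: x'_def Zs_nonpos)
  also have "\<dots> \<le> Zs q W (max x' y)"
    using Zs_diff[OF W, of x' "max x' y" q] assms
      mult_nonneg_nonneg[OF \<open>q \<ge> 0\<close> admissible_scale_integral_nonneg[OF W, of x' "max x' y"]]
    by (simp add: x'_def)
  also have "\<dots> = Zs q W y"
    using assms by (cases "y \<le> 0") (auto simp: x'_def Zs_nonpos max_def)
  finally show ?thesis .
qed

lemma Zs_ge_1: "admissible_scale W \<Longrightarrow> q \<ge> 0 \<Longrightarrow> Zs q W x \<ge> 1"
  using Zs_mono[of W q "min 0 x" x] by (simp add: Zs_nonpos)

lemma Zs_less:
  assumes W: "admissible_scale W" and "q > 0" "x < y" "0 < y"
  shows "Zs q W x < Zs q W y"
proof -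
  define x' where "x' = max 0 x"
  have "Zs q W x \<le> Zs q W x'" using assms by (intro Zs_mono) (auto simp: x'_def)
  also have "Zs q W x' < Zs q W y"
  proof -
    have "integral {x'..y} (\<lambda>_. 0) < integral {x'..y} W"
      using assms
      by (intro integral_less_real admissible_scale_continuous_on[OF W])
        (auto simp: x'_def intro: admissible_scale_pos)
    then have "0 < q * integral {x'..y} W" using assms by simp
    then show ?thesis using Zs_diff[OF W, of x' y q] assms by (simp add: x'_def)
  qed
  finally show ?thesis .
qed

lemma Zs_ge_linear:
  assumes W: "admissible_scale W" and "q \<ge> 0" "1 \<le> x"
  shows "Zs q W x \<ge> 1 + q * W 1 * (x - 1)"
proof -
  have "integral {1..x} (\<lambda>_. W 1) \<le> integral {1..x} W"
    using assms by (intro integral_le admissible_scale_integrable[OF W]) (auto intro: admissible_scale_mono)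
  then have "q * (W 1 * (x - 1)) \<le> q * integral {1..x} W"
    using assms by (intro mult_left_mono) (auto simp: mult.commute)
  then show ?thesis
    using Zs_diff[OF W, of 1 x q] Zs_ge_1[OF W, of q 1] assms by (simp add: mult.assoc)
qed

lemma continuous_on_Zs:
  assumes "admissible_scale W"
  shows "continuous_on UNIV (Zs q W)"
proof -
  have eq: "Zs q W x = 1 + q * integral {0..max 0 x} W" for x
    by (cases "x \<le> 0") (simp_all add: Zs_nonpos Zs_def max_def)
  have "continuous (at x) (Zs q W)" for x
  proof -
    define N where "N = \<bar>x\<bar> + 1"
    have "continuous_on {0..N} (\<lambda>y. integral {0..y} W)"
      using assms by (intro indefinite_integral_continuous_1 admissible_scale_integrable) auto
    then have "continuous_on {-N..N} (\<lambda>x. integral {0..max 0 x} W)"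
      by (rule continuous_on_compose2) (auto simp: N_def intro!: continuous_intros)
    then have "continuous_on {-N..N} (Zs q W)"
      unfolding eq by (intro continuous_intros)
    moreover have "x \<in> interior {-N..N}" by (auto simp: N_def)
    ultimately show ?thesis by (rule continuous_on_interior)
  qed
  then show ?thesis by (simp add: continuous_at_imp_continuous_on)
qed

lemma Zs_integrable: "admissible_scale W \<Longrightarrow> Zs q W integrable_on {a..b}"
  by (intro integrable_continuous_interval continuous_on_subset[OF continuous_on_Zs]) auto

lemma Zbar_0: "Zbar q W 0 = 0"
  by (simp add: Zbar_def)

lemma Zbar_diff:
  assumes "admissible_scale W" "0 \<le> x" "x \<le> y"
  shows "Zbar q W y - Zbar q W x = integral {x..y} (Zs q W)"
proof -
  have split: "integral {0..x} (Zs q W) + integral {x..y} (Zs q W) = integral {0..y} (Zs q W)"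
    using assms by (intro Henstock_Kurzweil_Integration.integral_combine Zs_integrable) auto
  show ?thesis by (simp add: Zbar_def algebra_simps flip: split)
qed

lemma Zbar_diff_ge:
  assumes "admissible_scale W" "q \<ge> 0" "0 \<le> x" "x \<le> y"
  shows "Zbar q W y - Zbar q W x \<ge> y - x"
proof -
  have "integral {x..y} (\<lambda>_. 1) \<le> integral {x..y} (Zs q W)"
    using assms by (intro integral_le Zs_integrable) (auto intro: Zs_ge_1)
  then show ?thesis using Zbar_diff[of W x y q] assms by simp
qed

lemma Zbar_le_mult_Zs:
  assumes "admissible_scale W" "q \<ge> 0" "0 \<le> x"
  shows "Zbar q W x \<le> x * Zs q W x"
proof -
  have "integral {0..x} (Zs q W) \<le> integral {0..x} (\<lambda>_. Zs q W x)"
    using assms by (intro integral_le Zs_integrable) (auto intro: Zs_mono)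
  then show ?thesis using assms by (simp add: Zbar_def)
qed

lemma continuous_on_Zbar: "admissible_scale W \<Longrightarrow> continuous_on {0..N} (Zbar q W)"
  unfolding Zbar_def by (intro indefinite_integral_continuous_1 Zs_integrable)

section \<open>The minimisation problem at a fixed discount factor\<close>

locale selection_problem =
  fixes q \<delta> \<rho> :: real and Wy Wx :: "real \<Rightarrow> real" and dX :: real
  assumes q_pos: "q > 0" and \<delta>_pos: "\<delta> > 0"
    and Wy: "admissible_scale Wy" and Wx: "admissible_scale Wx"
begin

abbreviation "A \<equiv> astar q \<delta> \<rho> Wy Wx dX"
abbreviation "B \<equiv> bstar q \<delta> \<rho> Wy Wx dX"

end

locale selection_at_discount = selection_problem +
  fixes \<beta> :: real
  assumes \<beta>_pos: "0 < \<beta>" and \<beta>_less_1: "\<beta> < 1"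
begin

abbreviation "G \<equiv> Gam q \<delta> \<rho> Wy Wx dX \<beta>"
abbreviation "Zx \<equiv> Zs q Wx"

definition Gam0 :: real where "Gam0 = \<delta> - q * \<rho> - \<beta> * dX"

text \<open>\<delta> q Gam_slope b a is the derivative of a \<mapsto> G a b.\<close>
definition Gam_slope :: "real \<Rightarrow> real \<Rightarrow> real" where
  "Gam_slope b u = Wy u * (1 - \<beta> * Zx (b - u))"

definition Gam_slope_integral :: "real \<Rightarrow> real \<Rightarrow> real" where
  "Gam_slope_integral a b = integral {0..a} (Gam_slope b)"

lemma continuous_on_Zx: "continuous_on UNIV Zx"
  by (rule continuous_on_Zs[OF Wx])

lemma continuous_on_Zx_compose[continuous_intros]:
  "continuous_on S f \<Longrightarrow> continuous_on S (\<lambda>x. Zx (f x))"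
  by (rule continuous_on_compose2[OF continuous_on_Zx]) auto

lemma Zx_mono: "x \<le> y \<Longrightarrow> Zx x \<le> Zx y"
  using q_pos by (intro Zs_mono[OF Wx]) auto

lemma Zx_less: "x < y \<Longrightarrow> 0 < y \<Longrightarrow> Zx x < Zx y"
  using q_pos by (intro Zs_less[OF Wx]) auto

lemma continuous_on_Gam_slope: "continuous_on {0..a} (Gam_slope b)"
  unfolding Gam_slope_def by (intro continuous_intros admissible_scale_continuous_on[OF Wy]) auto

lemma Gam_slope_integrable: "Gam_slope b integrable_on {0..a}"
  by (rule integrable_continuous_interval[OF continuous_on_Gam_slope])

lemma Gam_slope_integral_combine:
  "0 \<le> x \<Longrightarrow> x \<le> y \<Longrightarrow> Gam_slope_integral y b = Gam_slope_integral x b + integral {x..y} (Gam_slope b)"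
  unfolding Gam_slope_integral_def
  by (metis Henstock_Kurzweil_Integration.integral_combine Gam_slope_integrable)

lemma Gam_eq_slope_integral:
  assumes "0 \<le> a" "a \<le> b"
  shows "G a b = Gam0 - q * \<beta> * Zbar q Wx b + \<delta> * q * Gam_slope_integral a b"
proof -
  have conv: "integral {b-a..b} (\<lambda>y. Wy (b - y) * Zx y) = integral {0..a} (\<lambda>u. Wy u * Zx (b - u))"
    using integral_reflect_shift[of b a "\<lambda>u. Wy u * Zx (b - u)"] by simp
  have "Gam_slope_integral a b = integral {0..a} (\<lambda>u. Wy u - \<beta> * (Wy u * Zx (b - u)))"
    unfolding Gam_slope_integral_def Gam_slope_def by (simp add: algebra_simps)
  also have "\<dots> = integral {0..a} Wy - \<beta> * integral {0..a} (\<lambda>u. Wy u * Zx (b - u))"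
    by (subst integral_diff)
      (auto intro!: integrable_continuous_interval continuous_intros admissible_scale_integrable[OF Wy]
        admissible_scale_continuous_on[OF Wy])
  finally have slope: "Gam_slope_integral a b =
      integral {0..a} Wy - \<beta> * integral {0..a} (\<lambda>u. Wy u * Zx (b - u))" .
  show ?thesis
    unfolding Gam_def rtil_def Rq_def conv Zs_def[of q Wy] Gam0_def slope
    using q_pos by (simp add: algebra_simps)
qed

lemma Gam_0_0: "G 0 0 = Gam0"
  using Gam_eq_slope_integral[of 0 0] by (simp add: Gam_slope_integral_def Zbar_0)

lemma Gam_0: "0 \<le> b \<Longrightarrow> G 0 b = Gam0 - q * \<beta> * Zbar q Wx b"
  using Gam_eq_slope_integral[of 0 b] by (simp add: Gam_slope_integral_def)

lemma ex1_gap: "\<exists>!z. z \<ge> 0 \<and> Zx z = 1 / \<beta>"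
proof -
  have W1: "Wx 1 > 0" by (rule admissible_scale_pos[OF Wx]) simp
  define N where "N = max 1 (1 + (1 / \<beta> - 1) / (q * Wx 1))"
  have N1: "N \<ge> 1" by (simp add: N_def)
  have "q * Wx 1 * (N - 1) \<ge> q * Wx 1 * ((1 / \<beta> - 1) / (q * Wx 1))"
    using q_pos W1 by (intro mult_left_mono) (auto simp: N_def)
  then have "Zx N \<ge> 1 / \<beta>"
    using Zs_ge_linear[OF Wx _ N1, of q] q_pos W1 by simp
  moreover have "Zx 0 \<le> 1 / \<beta>" using \<beta>_pos \<beta>_less_1 by (simp add: Zs_nonpos field_simps)
  ultimately obtain z where z: "0 \<le> z" "Zx z = 1 / \<beta>"
    using IVT'[of Zx 0 "1/\<beta>" N] N1 continuous_on_subset[OF continuous_on_Zx] by auto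
  moreover have "w = z" if "w \<ge> 0" "Zx w = 1 / \<beta>" for w
    using Zx_less[of w z] Zx_less[of z w] z that by (cases w z rule: linorder_cases) auto
  ultimately show ?thesis by blast
qed

text \<open>gap is the value of b - a at the selected pair in the interior case.\<close>
definition gap :: real where "gap = (THE z. z \<ge> 0 \<and> Zx z = 1 / \<beta>)"

lemma gap_nonneg: "gap \<ge> 0" and Zx_gap: "Zx gap = 1 / \<beta>"
  using theI'[OF ex1_gap] by (auto simp: gap_def)

lemma gap_pos: "gap > 0"
proof -
  have "Zx 0 \<noteq> 1 / \<beta>" using \<beta>_pos \<beta>_less_1 by (simp add: Zs_nonpos field_simps)
  then show ?thesis using gap_nonneg Zx_gap by (cases "gap = 0") auto
qed

lemma gap_less: assumes "1 / \<beta> < Zx e" shows "gap < e"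
  using Zx_mono[of e gap] assms Zx_gap by linarith

lemma Gam_slope_neg: assumes "0 < u" "u < b - gap" shows "Gam_slope b u < 0"
proof -
  have "1 / \<beta> < Zx (b - u)" using assms gap_nonneg Zx_less[of gap "b - u"] by (simp add: Zx_gap)
  then have "1 < \<beta> * Zx (b - u)" using \<beta>_pos by (simp add: field_simps)
  then show ?thesis
    unfolding Gam_slope_def using admissible_scale_pos[OF Wy assms(1)] by (simp add: mult_pos_neg)
qed

lemma Gam_slope_pos: assumes "0 < u" "b - gap < u" shows "Gam_slope b u > 0"
proof -
  have "Zx (b - u) < 1 / \<beta>" using assms gap_pos Zx_less[of "b - u" gap] by (simp add: Zx_gap)
  then have "\<beta> * Zx (b - u) < 1" using \<beta>_pos by (simp add: field_simps)
  then show ?thesis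
    unfolding Gam_slope_def using admissible_scale_pos[OF Wy assms(1)] by simp
qed

definition best_a :: "real \<Rightarrow> real" where "best_a b = max 0 (b - gap)"

lemma best_a_in: "0 \<le> b \<Longrightarrow> best_a b \<in> {0..b}"
  using gap_pos by (auto simp: best_a_def)

text \<open>The slope changes sign exactly once, at b - gap, so best_a b is the strict minimiser.\<close>
lemma Gam_slope_integral_best_a_less:
  assumes "0 \<le> a" "a \<le> b" "a \<noteq> best_a b"
  shows "Gam_slope_integral (best_a b) b < Gam_slope_integral a b"
proof (cases "a < best_a b")
  case True
  then have "best_a b = b - gap" using assms by (auto simp: best_a_def)
  then have "integral {a..best_a b} (Gam_slope b) < integral {a..best_a b} (\<lambda>_. 0)"
    using True assms
    by (intro integral_less_real continuous_on_subset[OF continuous_on_Gam_slope] Gam_slope_neg) auto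
  moreover have "Gam_slope_integral (best_a b) b = Gam_slope_integral a b + integral {a..best_a b} (Gam_slope b)"
    using True assms by (intro Gam_slope_integral_combine) auto
  ultimately show ?thesis by simp
next
  case False
  then have lt: "best_a b < a" using assms by simp
  have "integral {best_a b..a} (\<lambda>_. 0) < integral {best_a b..a} (Gam_slope b)"
    using lt
    by (intro integral_less_real continuous_on_subset[OF continuous_on_Gam_slope] Gam_slope_pos)
      (auto simp: best_a_def)
  moreover have "Gam_slope_integral a b = Gam_slope_integral (best_a b) b + integral {best_a b..a} (Gam_slope b)"
    using lt by (intro Gam_slope_integral_combine) (auto simp: best_a_def)
  ultimately show ?thesis by simp
qed

lemma Gam_best_a_less:
  assumes "0 \<le> a" "a \<le> b" "a \<noteq> best_a b"
  shows "G (best_a b) b < G a b"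
  using Gam_slope_integral_best_a_less[OF assms] best_a_in[of b] assms \<delta>_pos q_pos
  by (simp add: Gam_eq_slope_integral)

lemma Gam_best_a_le: "0 \<le> a \<Longrightarrow> a \<le> b \<Longrightarrow> G (best_a b) b \<le> G a b"
  using Gam_best_a_less[of a b] by (cases "a = best_a b") auto

definition Gam_best :: "real \<Rightarrow> real" where "Gam_best b = G (best_a b) b"

lemma minGam_eq_Gam_best: "0 \<le> b \<Longrightarrow> minGam q \<delta> \<rho> Wy Wx dX \<beta> b = Gam_best b"
  unfolding minGam_def Gam_best_def
  by (rule cInf_eq_minimum) (use best_a_in Gam_best_a_le in auto)

lemma Gam_best_eq:
  "0 \<le> b \<Longrightarrow> Gam_best b = Gam0 - q * \<beta> * Zbar q Wx b + \<delta> * q * Gam_slope_integral (best_a b) b"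
  unfolding Gam_best_def using best_a_in by (intro Gam_eq_slope_integral) auto

lemma Gam_best_0: "Gam_best 0 = Gam0"
  using gap_pos Gam_0_0 by (simp add: Gam_best_def best_a_def)

lemma Gam_best_le: assumes "0 \<le> b" shows "Gam_best b \<le> Gam0 - q * \<beta> * b"
proof -
  have "Gam_best b \<le> G 0 b" unfolding Gam_best_def using assms by (intro Gam_best_a_le) auto
  moreover have "Zbar q Wx b \<ge> b" using Zbar_diff_ge[OF Wx _ _ assms] q_pos by (simp add: Zbar_0)
  then have "q * \<beta> * b \<le> q * \<beta> * Zbar q Wx b" using q_pos \<beta>_pos by (intro mult_left_mono) auto
  ultimately show ?thesis using Gam_0[OF assms] by linarith
qed

lemma Gam_best_gap: "Gam_best gap = Gam0 - q * \<beta> * Zbar q Wx gap"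
  using Gam_0[OF gap_nonneg] by (simp add: Gam_best_def best_a_def)

text \<open>Fixing a, the map b \<mapsto> G a b is strictly decreasing: Zbar grows at rate at least 1
  and the slope decreases in b.\<close>
lemma Gam_best_decreasing: assumes "0 \<le> b1" "b1 < b2" shows "Gam_best b2 < Gam_best b1"
proof -
  define a where "a = best_a b1"
  have a: "0 \<le> a" "a \<le> b1" using best_a_in[OF assms(1)] by (auto simp: a_def)
  have "Zbar q Wx b2 - Zbar q Wx b1 \<ge> b2 - b1" using assms q_pos by (intro Zbar_diff_ge[OF Wx]) auto
  then have "q * \<beta> * Zbar q Wx b1 < q * \<beta> * Zbar q Wx b2" using assms q_pos \<beta>_pos by simp
  moreover have "Gam_slope_integral a b2 \<le> Gam_slope_integral a b1"
    unfolding Gam_slope_integral_def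
  proof (rule integral_le[OF Gam_slope_integrable Gam_slope_integrable])
    fix u assume "u \<in> {0..a}"
    have "1 - \<beta> * Zx (b2 - u) \<le> 1 - \<beta> * Zx (b1 - u)"
      using assms \<beta>_pos Zx_mono[of "b1 - u" "b2 - u"] by simp
    then show "Gam_slope b2 u \<le> Gam_slope b1 u"
      unfolding Gam_slope_def by (rule mult_left_mono[OF _ admissible_scale_nonneg[OF Wy]])
  qed
  moreover have "\<delta> * q * Gam_slope_integral a b2 \<le> \<delta> * q * Gam_slope_integral a b1"
    using calculation(2) \<delta>_pos q_pos by (intro mult_left_mono) auto
  ultimately have "G a b2 < G a b1"
    using a assms by (simp add: Gam_eq_slope_integral)
  moreover have "Gam_best b2 \<le> G a b2" unfolding Gam_best_def using a assms by (intro Gam_best_a_le) auto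
  ultimately show ?thesis by (simp add: Gam_best_def a_def)
qed

lemma Gam_best_inj: "0 \<le> x \<Longrightarrow> 0 \<le> y \<Longrightarrow> Gam_best x = Gam_best y \<Longrightarrow> x = y"
  using Gam_best_decreasing[of x y] Gam_best_decreasing[of y x] by (cases x y rule: linorder_cases) auto

text \<open>Continuity in b of the integral over [0, best_a b] follows by rescaling to the fixed interval
  [0,1] and continuity of parametric integrals; Wy is extended continuously to the left of 0.\<close>
lemma continuous_on_Gam_best: "continuous_on {0..N} Gam_best"
proof -
  define Wc where "Wc u = Wy (max 0 u)" for u
  define h where "h b t = Wc (best_a b * t) * (1 - \<beta> * Zx (b - best_a b * t))" for b t
  have "continuous_on UNIV Wc"
    unfolding Wc_def
    by (rule continuous_on_compose2[of "{0..}" Wy]) (use Wy in \<open>auto simp: admissible_scale_def intro!: continuous_intros\<close>)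
  then have Wc_compose: "continuous_on S f \<Longrightarrow> continuous_on S (\<lambda>x. Wc (f x))" for S and f :: "'a::topological_space \<Rightarrow> real"
    by (rule continuous_on_compose2) auto
  have "continuous_on (UNIV \<times> cbox 0 1) (\<lambda>p. h (fst p) (snd p))"
    unfolding h_def best_a_def by (intro continuous_intros Wc_compose)
  then have "continuous_on UNIV (\<lambda>b. integral (cbox 0 1) (h b))"
    by (intro integral_continuous_on_param) (simp add: split_beta)
  then have cont: "continuous_on {0..N} (\<lambda>b. Gam0 - q * \<beta> * Zbar q Wx b + \<delta> * q * (best_a b * integral {0..1} (h b)))"
    unfolding best_a_def
    by (intro continuous_intros continuous_on_Zbar[OF Wx]) (auto intro: continuous_on_subset)
  have stretch: "Gam_slope_integral (best_a b) b = best_a b * integral {0..1} (h b)" if "0 \<le> b" for b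
  proof (cases "best_a b = 0")
    case False
    then have pos: "best_a b > 0" by (simp add: best_a_def)
    have "Gam_slope_integral (best_a b) b = best_a b * integral {0..1} (\<lambda>t. Gam_slope b (best_a b * t))"
      unfolding Gam_slope_integral_def by (rule integral_stretch_to_unit[OF pos Gam_slope_integrable])
    also have "integral {0..1} (\<lambda>t. Gam_slope b (best_a b * t)) = integral {0..1} (h b)"
      by (rule integral_cong) (use pos in \<open>auto simp: Gam_slope_def h_def Wc_def\<close>)
    finally show ?thesis .
  qed (simp add: Gam_slope_integral_def)
  show ?thesis
    by (rule continuous_on_eq[OF cont]) (simp add: Gam_best_eq stretch)
qed

lemma Gam_best_root_exists: assumes "Gam0 > 0" shows "\<exists>r>0. Gam_best r = 0"
proof -
  define N where "N = Gam0 / (q * \<beta>) + 1"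
  have N: "N \<ge> 0" using assms q_pos \<beta>_pos by (simp add: N_def)
  have "Gam_best N \<le> Gam0 - q * \<beta> * N" by (rule Gam_best_le[OF N])
  also have "\<dots> = - q * \<beta>" using q_pos \<beta>_pos by (simp add: N_def field_simps)
  finally have "Gam_best N \<le> 0" using mult_pos_pos[OF q_pos \<beta>_pos] by linarith
  then obtain r where r: "0 \<le> r" "Gam_best r = 0"
    using IVT2'[of Gam_best N 0 0] Gam_best_0 assms N continuous_on_Gam_best[of N] by auto
  moreover have "r \<noteq> 0" using r Gam_best_0 assms by auto
  ultimately show ?thesis by (intro exI[of _ r]) auto
qed

lemma selected_pair_trivial: "Gam0 \<le> 0 \<Longrightarrow> A \<beta> = 0 \<and> B \<beta> = 0"
  by (simp add: astar_def bstar_def Gam_0_0)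

lemma bstar_pos: "Gam0 > 0 \<Longrightarrow> B \<beta> > 0" and Gam_best_bstar: "Gam0 > 0 \<Longrightarrow> Gam_best (B \<beta>) = 0"
proof -
  assume pos: "Gam0 > 0"
  obtain r where r: "r > 0" "Gam_best r = 0" using Gam_best_root_exists[OF pos] by blast
  have "B \<beta> = (THE b. 0 < b \<and> minGam q \<delta> \<rho> Wy Wx dX \<beta> b = 0)"
    using pos by (simp add: bstar_def Gam_0_0)
  also have "\<dots> = r"
  proof (rule the_equality)
    show "0 < r \<and> minGam q \<delta> \<rho> Wy Wx dX \<beta> r = 0" using r minGam_eq_Gam_best[of r] by simp
    show "b = r" if "0 < b \<and> minGam q \<delta> \<rho> Wy Wx dX \<beta> b = 0" for b
      using that r minGam_eq_Gam_best[of b] Gam_best_inj[of b r] by auto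
  qed
  finally show "B \<beta> > 0" "Gam_best (B \<beta>) = 0" using r by auto
qed

lemma bstar_le: assumes "Gam0 > 0" shows "B \<beta> \<le> Gam0 / (q * \<beta>)"
  using Gam_best_le[of "B \<beta>"] bstar_pos[OF assms] Gam_best_bstar[OF assms] q_pos \<beta>_pos
  by (simp add: field_simps)

lemma astar_eq_best_a: assumes "Gam0 > 0" shows "A \<beta> = best_a (B \<beta>)"
proof -
  have B_nonneg: "B \<beta> \<ge> 0" using bstar_pos[OF assms] by simp
  have "(THE a. a \<in> {0..B \<beta>} \<and> (\<forall>a'\<in>{0..B \<beta>}. G a (B \<beta>) \<le> G a' (B \<beta>))) = best_a (B \<beta>)"
  proof (rule the_equality)
    show "best_a (B \<beta>) \<in> {0..B \<beta>} \<and> (\<forall>a'\<in>{0..B \<beta>}. G (best_a (B \<beta>)) (B \<beta>) \<le> G a' (B \<beta>))"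
      using best_a_in[OF B_nonneg] Gam_best_a_le by auto
    show "a = best_a (B \<beta>)" if "a \<in> {0..B \<beta>} \<and> (\<forall>a'\<in>{0..B \<beta>}. G a (B \<beta>) \<le> G a' (B \<beta>))" for a
      using that best_a_in[OF B_nonneg] Gam_best_a_less[of a "B \<beta>"] by force
  qed
  then show ?thesis using assms by (simp add: astar_def Gam_0_0 Let_def)
qed

lemma selected_pair_bounds:
  assumes "Gam0 > 0"
  shows "0 < B \<beta> \<and> B \<beta> \<le> Gam0 / (q * \<beta>) \<and> 0 \<le> A \<beta> \<and> A \<beta> \<le> B \<beta>"
  using bstar_pos[OF assms] bstar_le[OF assms] astar_eq_best_a[OF assms] best_a_in[of "B \<beta>"] by auto

text \<open>If Gam0 > q e and Zx e > 1/\<beta>, then gap < e and G is still positive at (0, gap),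
  so the root B \<beta> lies beyond gap and the minimiser best_a (B \<beta>) = B \<beta> - gap is interior.\<close>
lemma selected_pair_interior:
  assumes "e > 0" and Zx_e: "1 / \<beta> < Zx e" and Gam0: "Gam0 > q * e"
  shows "0 < A \<beta> \<and> A \<beta> < B \<beta> \<and> Zx (B \<beta> - A \<beta>) = 1 / \<beta> \<and> B \<beta> - A \<beta> < e"
proof -
  have gap_e: "gap < e" by (rule gap_less[OF Zx_e])
  have pos: "Gam0 > 0" using Gam0 mult_pos_pos[OF q_pos \<open>e > 0\<close>] by linarith
  have "q * \<beta> * Zbar q Wx gap \<le> q * \<beta> * (gap * Zx gap)"
    using gap_nonneg q_pos \<beta>_pos by (intro mult_left_mono Zbar_le_mult_Zs[OF Wx]) auto
  also have "\<dots> = q * gap" using \<beta>_pos by (simp add: Zx_gap)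
  also have "\<dots> < q * e" using gap_e q_pos by simp
  finally have "Gam_best (B \<beta>) < Gam_best gap"
    using Gam_best_gap Gam0 Gam_best_bstar[OF pos] by linarith
  then have "gap < B \<beta>"
    using Gam_best_decreasing[of "B \<beta>" gap] bstar_pos[OF pos] by (cases "B \<beta> = gap") force+
  then have "A \<beta> = B \<beta> - gap" using astar_eq_best_a[OF pos] by (simp add: best_a_def)
  then show ?thesis using \<open>gap < B \<beta>\<close> gap_pos gap_e Zx_gap by auto
qed

end

section \<open>The limit \<beta> \<rightarrow> 1\<close>

context selection_problem
begin

lemma selection_at_discountI: "0 < \<beta> \<Longrightarrow> \<beta> < 1 \<Longrightarrow> selection_at_discount q \<delta> Wy Wx \<beta>"
  by (intro selection_at_discount.intro selection_at_discount_axioms.intro selection_problem_axioms)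

lemma eventually_discount_near_1: "\<forall>\<^sub>F \<beta> in at_left 1. 0 < \<beta> \<and> \<beta> < (1::real)"
  using eventually_at_left_real[of 0 1] by (auto elim: eventually_mono)

lemma tendsto_Gam0: "((\<lambda>\<beta>. \<delta> - q * \<rho> - \<beta> * dX) \<longlongrightarrow> \<delta> - q * \<rho> - dX) (at_left 1)"
  by (auto intro!: tendsto_eq_intros)

lemma selected_pair_eventually_interior:
  assumes pos: "\<delta> - q * \<rho> - dX > 0"
  shows "(\<forall>\<^sub>F \<beta> in at_left 1. 0 < A \<beta> \<and> A \<beta> < B \<beta> \<and> Zs q Wx (B \<beta> - A \<beta>) = 1 / \<beta>)
    \<and> ((\<lambda>\<beta>. B \<beta> - A \<beta>) \<longlongrightarrow> 0) (at_left 1)"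
proof -
  have close: "\<forall>\<^sub>F \<beta> in at_left 1.
      0 < A \<beta> \<and> A \<beta> < B \<beta> \<and> Zs q Wx (B \<beta> - A \<beta>) = 1 / \<beta> \<and> B \<beta> - A \<beta> < e"
    if e: "0 < e" "q * e < \<delta> - q * \<rho> - dX" for e
  proof -
    have "1 < Zs q Wx e" using Zs_less[OF Wx q_pos, of 0 e] e by (simp add: Zs_nonpos)
    moreover have "((\<lambda>\<beta>. 1 / \<beta>) \<longlongrightarrow> 1) (at_left (1::real))"
      by (auto intro!: tendsto_eq_intros)
    ultimately have "\<forall>\<^sub>F \<beta> in at_left 1. 1 / \<beta> < Zs q Wx e"
      by (intro order_tendstoD(2))
    moreover have "\<forall>\<^sub>F \<beta> in at_left 1. q * e < \<delta> - q * \<rho> - \<beta> * dX"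
      using tendsto_Gam0 e by (intro order_tendstoD(1))
    ultimately show ?thesis using eventually_discount_near_1
    proof eventually_elim
      case (elim \<beta>)
      interpret selection_at_discount q \<delta> \<rho> Wy Wx dX \<beta>
        using elim by (intro selection_at_discountI) auto
      show ?case using elim by (intro selected_pair_interior e(1)) (auto simp: Gam0_def)
    qed
  qed
  define \<kappa> where "\<kappa> = \<delta> - q * \<rho> - dX"
  define e0 where "e0 = \<kappa> / (2 * q)"
  have "q * e0 = \<kappa> / 2" using q_pos by (simp add: e0_def)
  then have e0: "0 < e0" "q * e0 < \<delta> - q * \<rho> - dX"
    using pos q_pos by (auto simp: e0_def \<kappa>_def[symmetric])
  have "((\<lambda>\<beta>. B \<beta> - A \<beta>) \<longlongrightarrow> 0) (at_left 1)"
  proof (rule tendstoI)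
    fix \<epsilon> :: real assume "\<epsilon> > 0"
    moreover have "q * min e0 \<epsilon> \<le> q * e0" using q_pos by (intro mult_left_mono) auto
    ultimately have "0 < min e0 \<epsilon>" "q * min e0 \<epsilon> < \<delta> - q * \<rho> - dX"
      using e0 by auto
    from close[OF this] show "\<forall>\<^sub>F \<beta> in at_left 1. dist (B \<beta> - A \<beta>) 0 < \<epsilon>"
      by eventually_elim auto
  qed
  with close[OF e0] show ?thesis by (auto elim: eventually_mono)
qed

lemma selected_pair_eventually_zero:
  assumes "\<delta> - q * \<rho> - dX < 0"
  shows "\<forall>\<^sub>F \<beta> in at_left 1. A \<beta> = 0 \<and> B \<beta> = 0"
  using order_tendstoD(2)[OF tendsto_Gam0 assms] eventually_discount_near_1
proof eventually_elim
  case (elim \<beta>)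
  interpret selection_at_discount q \<delta> \<rho> Wy Wx dX \<beta>
    using elim by (intro selection_at_discountI) auto
  show ?case using elim by (intro selected_pair_trivial) (simp add: Gam0_def)
qed

lemma selected_pair_tendsto_zero:
  assumes "\<delta> - q * \<rho> - dX = 0" and "dX > 0"
  shows "(\<forall>\<beta>\<in>{0<..<1}. B \<beta> > 0) \<and> (A \<longlongrightarrow> 0) (at_left 1) \<and> (B \<longlongrightarrow> 0) (at_left 1)"
proof -
  have bounds: "0 < B \<beta> \<and> B \<beta> \<le> (1 - \<beta>) * dX / (q * \<beta>) \<and> 0 \<le> A \<beta> \<and> A \<beta> \<le> B \<beta>"
    if "0 < \<beta>" "\<beta> < 1" for \<beta>
  proof -
    interpret selection_at_discount q \<delta> \<rho> Wy Wx dX \<beta>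
      using that by (rule selection_at_discountI)
    have "Gam0 = (1 - \<beta>) * dX"
      unfolding Gam0_def left_diff_distrib using assms(1) by linarith
    then show ?thesis using selected_pair_bounds that assms(2) by simp
  qed
  have "((\<lambda>\<beta>. (1 - \<beta>) * dX / (q * \<beta>)) \<longlongrightarrow> (1 - 1) * dX / (q * 1)) (at_left 1)"
    using q_pos by (intro tendsto_intros) auto
  then have upper: "((\<lambda>\<beta>. (1 - \<beta>) * dX / (q * \<beta>)) \<longlongrightarrow> 0) (at_left 1)" by simp
  have ev: "\<forall>\<^sub>F \<beta> in at_left 1. 0 \<le> A \<beta> \<and> A \<beta> \<le> B \<beta> \<and> B \<beta> \<le> (1 - \<beta>) * dX / (q * \<beta>)"
    using eventually_discount_near_1 by eventually_elim (use bounds in auto)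
  have B_lim: "(B \<longlongrightarrow> 0) (at_left 1)"
    by (rule tendsto_sandwich[OF _ _ tendsto_const upper]) (use ev in \<open>auto elim: eventually_mono\<close>)
  moreover have "(A \<longlongrightarrow> 0) (at_left 1)"
    by (rule tendsto_sandwich[OF _ _ tendsto_const B_lim]) (use ev in \<open>auto elim: eventually_mono\<close>)
  ultimately show ?thesis using bounds by auto
qed

lemma selected_pair_zero:
  assumes "\<delta> - q * \<rho> - dX = 0" and "dX \<le> 0" and "\<beta> \<in> {0<..<1}"
  shows "A \<beta> = 0 \<and> B \<beta> = 0"
proof -
  interpret selection_at_discount q \<delta> \<rho> Wy Wx dX \<beta>
    using assms(3) by (intro selection_at_discountI) auto
  have "Gam0 = (1 - \<beta>) * dX"
      unfolding Gam0_def left_diff_distrib using assms(1) by linarith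
  also have "\<dots> \<le> 0" using assms(2,3) by (simp add: mult_nonneg_nonpos)
  finally show ?thesis by (rule selected_pair_trivial)
qed

end

theorem mainTheorem11:
  fixes gam sig :: real and Lm :: "real measure"
    and q \<delta> \<rho> :: real and Wy Wx :: "real \<Rightarrow> real"
  defines "psiY \<equiv> laplace_exp gam sig Lm"
  defines "dY \<equiv> rderiv0 psiY"
  defines "dX \<equiv> dY + \<delta>"
  defines "A \<equiv> astar q \<delta> \<rho> Wy Wx dX"
  defines "B \<equiv> bstar q \<delta> \<rho> Wy Wx dX"
  assumes triple: "spos_levy_triple gam sig Lm"
    and not_sub: "\<not> spos_is_subordinator gam sig Lm"
    and mean: "spos_finite_mean Lm"
    and q: "q > 0" and \<delta>: "\<delta> > 0"
    and Wy: "is_scale_fun psiY q Wy"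
    and Wx: "is_scale_fun (\<lambda>th. psiY th + \<delta> * th) q Wx"
  shows
    "(dY + q * \<rho> < 0 \<longrightarrow>
        (\<forall>\<^sub>F \<beta> in at_left 1. 0 < A \<beta> \<and> A \<beta> < B \<beta> \<and> Zs q Wx (B \<beta> - A \<beta>) = 1 / \<beta>) \<and>
        ((\<lambda>\<beta>. B \<beta> - A \<beta>) \<longlongrightarrow> 0) (at_left 1))
   \<and> (dY + q * \<rho> > 0 \<longrightarrow> (\<forall>\<^sub>F \<beta> in at_left 1. A \<beta> = 0 \<and> B \<beta> = 0))
   \<and> (dY + q * \<rho> = 0 \<and> dX > 0 \<longrightarrow>
        (\<forall>\<beta>\<in>{0<..<1}. B \<beta> > 0) \<and> (A \<longlongrightarrow> 0) (at_left 1) \<and> (B \<longlongrightarrow> 0) (at_left 1))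
   \<and> (dY + q * \<rho> = 0 \<and> dX \<le> 0 \<longrightarrow> (\<forall>\<beta>\<in>{0<..<1}. A \<beta> = 0 \<and> B \<beta> = 0))"
proof -
  have psiY_unbounded: "\<exists>th>T. psiY th > M" for T M
    unfolding psiY_def by (rule laplace_exp_unbounded[OF triple not_sub])
  have "admissible_scale Wy"
    using Wy psiY_unbounded by (rule is_scale_fun_admissible)
  moreover have "admissible_scale Wx"
  proof (rule is_scale_fun_admissible[OF Wx])
    fix T
    obtain th where "th > max T 0" "psiY th > q" using psiY_unbounded by blast
    moreover have "\<delta> * th > 0" using \<open>th > max T 0\<close> \<delta> by simp
    ultimately show "\<exists>th>T. psiY th + \<delta> * th > q" by (intro exI[of _ th]) auto
  qed
  ultimately interpret selection_problem q \<delta> \<rho> Wy Wx dX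
    using q \<delta> by unfold_locales
  \<comment> \<open>dY is only used as a number.\<close>
  have "\<delta> - q * \<rho> - dX = - (dY + q * \<rho>)" by (simp add: dX_def)
  then show ?thesis
    unfolding A_def B_def
    using selected_pair_eventually_interior selected_pair_eventually_zero
      selected_pair_tendsto_zero selected_pair_zero
    by auto
qed

end
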